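(* There exist constants $\eta>0$, $c>0$ and $N_0$ such that for every integer $N\geq N_0$ the following holds: if $\{0,1\}^N$ is partitioned into clusters such that whenever $u,v$ lie in the same cluster there are at most $\eta\cdot2^N$ points $w\in\{0,1\}^N$ with $d_H(u,w)\geq N/2$ and $d_H(v,w)\leq N/2-\sqrt N$, then the number of clusters is at least $2^{cN}$.
   Context: $d_H$ denotes the Hamming distance on $\{0,1\}^N$. *)

theory Defs
  imports Complex_Main "HOL-Library.Disjoint_Sets"
begin

text \<open>The cube {0,1}^N, a point being identified with its support, a subset of {0..<N}.\<close>
definition cube :: "nat \<Rightarrow> nat set set" where
  "cube N = Pow {..<N}"

definition hamming :: "nat set \<Rightarrow> nat set \<Rightarrow> nat" where
  "hamming u v = card ((u - v) \<union> (v - u))"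

end

theory Submission
  imports Defs
begin

text \<open>With fewer than \<open>2^(N/8)\<close> clusters some cluster has more than \<open>2^(7N/8)\<close> points,
  more than a Hamming ball of radius \<open>N/4\<close> holds, so it contains \<open>u, v\<close> with
  \<open>D = u \<triangle> v\<close> of size \<open>> N/4\<close>. Flipping \<open>u\<close> on \<open>x \<union> y\<close> with \<open>x \<subseteq> D\<close> and \<open>y\<close>
  disjoint from \<open>D\<close> gives a point at distance \<open>|x| + |y|\<close> from \<open>u\<close> and \<open>|D| - |x| + |y|\<close>
  from \<open>v\<close>. It lies in the forbidden region as soon as \<open>x\<close> is biased by \<open>8\<surd>|D|\<close> within
  \<open>D\<close>, which happens for a constant fraction of all \<open>x\<close> (Paley--Zygmund on blocks), and
  \<open>y\<close> is balanced up to \<open>2\<surd>N\<close>, which happens for \<open>3/4\<close> of all \<open>y\<close> (Chebyshev). So the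
  region has at least \<open>c 2^N\<close> points.\<close>

text \<open>\<open>bias D x\<close> is the sum over \<open>D\<close> of the signs \<open>+1\<close> on \<open>x\<close> and \<open>-1\<close> off \<open>x\<close>; counting
  subsets of \<open>D\<close> amounts to counting outcomes of \<open>|D|\<close> fair coin flips.\<close>
definition bias :: "'a set \<Rightarrow> 'a set \<Rightarrow> real" where
  "bias D x = 2 * real (card x) - real (card D)"

definition upper_tail :: "'a set \<Rightarrow> real \<Rightarrow> 'a set set" where
  "upper_tail D t = {x \<in> Pow D. t \<le> bias D x}"

definition far_near :: "nat \<Rightarrow> nat set \<Rightarrow> nat set \<Rightarrow> nat set set" where
  "far_near N u v = {w \<in> cube N.
     real (hamming u w) \<ge> real N / 2 \<and> real (hamming v w) \<le> real N / 2 - sqrt (real N)}"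

lemma upper_tail_antimono: "s \<le> t \<Longrightarrow> upper_tail D t \<subseteq> upper_tail D s"
  by (auto simp: upper_tail_def)

lemma finite_upper_tail: "finite D \<Longrightarrow> finite (upper_tail D t)"
  by (simp add: upper_tail_def)

lemma sum_Pow_insert:
  assumes "finite F" "a \<notin> F"
  shows "sum g (Pow (insert a F)) = (\<Sum>y\<in>Pow F. g y + g (insert a y))"
proof -
  have inj: "inj_on (insert a) (Pow F)"
    using assms(2) unfolding inj_on_def by (meson PowD in_mono insert_ident)
  have "sum g (Pow (insert a F)) = sum g (Pow F) + sum g (insert a ` Pow F)"
    unfolding Pow_insert by (rule sum.union_disjoint) (use assms in auto)
  also have "sum g (insert a ` Pow F) = (\<Sum>y\<in>Pow F. g (insert a y))"
    using sum.reindex[OF inj] by simp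
  finally show ?thesis by (simp add: sum.distrib)
qed

lemma bias_insert:
  assumes "finite F" "a \<notin> F" "y \<subseteq> F"
  shows "bias (insert a F) y = bias F y - 1"
    and "bias (insert a F) (insert a y) = bias F y + 1"
proof -
  have "finite y" "a \<notin> y" using assms finite_subset by auto
  then show "bias (insert a F) y = bias F y - 1" "bias (insert a F) (insert a y) = bias F y + 1"
    using assms by (simp_all add: bias_def)
qed

lemma sum_bias_power2:
  "finite D \<Longrightarrow> (\<Sum>x\<in>Pow D. bias D x ^ 2) = real (card D) * 2 ^ card D"
proof (induction D rule: finite_induct)
  case (insert a F)
  have "(\<Sum>y\<in>Pow (insert a F). bias (insert a F) y ^ 2) = (\<Sum>y\<in>Pow F. 2 * bias F y ^ 2 + 2)"
    unfolding sum_Pow_insert[OF insert(1,2)]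
    by (rule sum.cong) (use insert in \<open>auto simp: bias_insert power2_eq_square algebra_simps\<close>)
  then show ?case
    using insert by (simp add: sum.distrib sum_distrib_left[symmetric] card_Pow algebra_simps)
qed (simp add: bias_def)

lemma sum_bias_power4:
  "finite D \<Longrightarrow>
    (\<Sum>x\<in>Pow D. bias D x ^ 4) = (3 * real (card D) ^ 2 - 2 * real (card D)) * 2 ^ card D"
proof (induction D rule: finite_induct)
  case (insert a F)
  have "(\<Sum>y\<in>Pow (insert a F). bias (insert a F) y ^ 4)
      = (\<Sum>y\<in>Pow F. 2 * bias F y ^ 4 + 12 * bias F y ^ 2 + 2)"
    unfolding sum_Pow_insert[OF insert(1,2)]
    by (rule sum.cong)
      (use insert in \<open>auto simp: bias_insert power2_eq_square power4_eq_xxxx algebra_simps\<close>)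
  also have "\<dots> = 2 * ((3 * real (card F) ^ 2 - 2 * real (card F)) * 2 ^ card F)
      + 12 * (real (card F) * 2 ^ card F) + 2 * 2 ^ card F"
    by (simp add: sum.distrib sum_distrib_left[symmetric] insert.IH sum_bias_power2[OF insert(1)]
        card_Pow[OF insert(1)])
  finally show ?case
    using insert by (simp add: algebra_simps power2_eq_square)
qed (simp add: bias_def)

lemma bias_Diff: "finite D \<Longrightarrow> x \<subseteq> D \<Longrightarrow> bias D (D - x) = - bias D x"
  by (simp add: bias_def card_Diff_subset finite_subset card_mono of_nat_diff)

lemma card_bias_reflect:
  assumes "finite D"
  shows "card {x \<in> Pow D. P (bias D x)} = card {x \<in> Pow D. P (- bias D x)}"
proof -
  have "bij_betw (\<lambda>x. D - x) {x \<in> Pow D. P (- bias D x)} {x \<in> Pow D. P (bias D x)}"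
    by (rule bij_betw_byWitness[where f' = "\<lambda>x. D - x"]) (auto simp: bias_Diff[OF assms])
  then show ?thesis by (simp add: bij_betw_same_card)
qed

lemma card_bias_power2_le:
  assumes "finite A" "real (card A) \<le> r" "r > 0"
  shows "3/4 * 2 ^ card A \<le> real (card {y \<in> Pow A. bias A y ^ 2 \<le> 4 * r})"
proof -
  define H where "H = {y \<in> Pow A. bias A y ^ 2 \<le> 4 * r}"
  have fin: "finite (Pow A)" using assms(1) by simp
  have "real (card (Pow A - H)) * (4 * r) = (\<Sum>y\<in>Pow A - H. 4 * r)" by simp
  also have "\<dots> \<le> (\<Sum>y\<in>Pow A - H. bias A y ^ 2)" by (rule sum_mono) (auto simp: H_def)
  also have "\<dots> \<le> (\<Sum>y\<in>Pow A. bias A y ^ 2)" by (rule sum_mono2[OF fin]) auto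
  also have "\<dots> \<le> r * 2 ^ card A" using assms(2) by (simp add: sum_bias_power2[OF assms(1)])
  finally have "real (card (Pow A - H)) \<le> 2 ^ card A / 4" using assms(3) by (simp add: field_simps)
  moreover have "H \<subseteq> Pow A" by (auto simp: H_def)
  then have "card (Pow A - H) = 2 ^ card A - card H" "card H \<le> 2 ^ card A"
    using fin assms(1) card_mono[OF fin] by (auto simp: card_Diff_subset finite_subset card_Pow)
  ultimately show ?thesis by (simp add: H_def of_nat_diff)
qed

lemma power2_le_power4_div_add:
  fixes t n :: real
  assumes "n > 0"
  shows "t ^ 2 \<le> t ^ 4 / (8 * n) + 2 * n"
proof -
  have "8 * n * t ^ 2 \<le> t ^ 4 + 16 * n ^ 2"
    using zero_le_power2[of "t ^ 2 - 4 * n"]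
    by (simp add: power2_eq_square power4_eq_xxxx algebra_simps)
  then show ?thesis using assms by (simp add: field_simps power2_eq_square)
qed

text \<open>Paley--Zygmund, from the second and fourth moments of the bias.\<close>
lemma card_bias_power2_ge:
  assumes "finite B" "card B \<ge> 1"
  shows "3/16 * 2 ^ card B \<le> real (card {y \<in> Pow B. real (card B) / 4 \<le> bias B y ^ 2})"
proof -
  define n where "n = real (card B)"
  define T where "T = {y \<in> Pow B. n / 4 \<le> bias B y ^ 2}"
  have n: "n \<ge> 1" using assms(2) by (simp add: n_def)
  have fin: "finite (Pow B)" using assms(1) by simp
  have TB: "T \<subseteq> Pow B" by (auto simp: T_def)
  have "(\<Sum>y\<in>Pow B - T. bias B y ^ 2) \<le> (\<Sum>y\<in>Pow B - T. n / 4)"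
    by (rule sum_mono) (auto simp: T_def)
  also have "\<dots> \<le> 2 ^ card B * (n / 4)"
    using card_mono[OF fin Diff_subset[of _ T]] n assms(1)
    by (simp add: card_Pow)
  finally have "(\<Sum>y\<in>Pow B - T. bias B y ^ 2) \<le> 1/4 * n * 2 ^ card B"
    by (simp add: algebra_simps)
  moreover have "(\<Sum>y\<in>Pow B. bias B y ^ 2) = (\<Sum>y\<in>T. bias B y ^ 2) + (\<Sum>y\<in>Pow B - T. bias B y ^ 2)"
    using sum.subset_diff[OF TB fin] by (simp add: add.commute)
  ultimately have low: "3/4 * n * 2 ^ card B \<le> (\<Sum>y\<in>T. bias B y ^ 2)"
    using sum_bias_power2[OF assms(1)] by (simp add: n_def)
  have "(\<Sum>y\<in>T. bias B y ^ 2) \<le> (\<Sum>y\<in>T. bias B y ^ 4 / (8 * n) + 2 * n)"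
    using n by (intro sum_mono power2_le_power4_div_add) simp
  also have "\<dots> = (\<Sum>y\<in>T. bias B y ^ 4) / (8 * n) + 2 * n * real (card T)"
    by (simp add: sum.distrib sum_divide_distrib)
  also have "(\<Sum>y\<in>T. bias B y ^ 4) / (8 * n) \<le> 3/8 * n * 2 ^ card B"
  proof -
    have "(\<Sum>y\<in>T. bias B y ^ 4) \<le> (3 * n ^ 2 - 2 * n) * 2 ^ card B"
      using sum_mono2[OF fin TB, of "\<lambda>y. bias B y ^ 4"] sum_bias_power4[OF assms(1)]
      by (simp add: n_def)
    also have "\<dots> \<le> 3 * n ^ 2 * 2 ^ card B" using n by (simp add: algebra_simps)
    finally show ?thesis using n by (simp add: field_simps power2_eq_square)
  qed
  finally have "3/8 * n * 2 ^ card B \<le> 2 * n * real (card T)" using low by simp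
  then show ?thesis using n by (simp add: T_def n_def field_simps)
qed

lemma card_upper_tail_half_sqrt:
  assumes "finite B" "card B \<ge> 1"
  shows "3/32 * 2 ^ card B \<le> real (card (upper_tail B (sqrt (real (card B)) / 2)))"
proof -
  define t where "t = sqrt (real (card B)) / 2"
  have cover: "{y \<in> Pow B. real (card B) / 4 \<le> bias B y ^ 2}
      \<subseteq> upper_tail B t \<union> {y \<in> Pow B. t \<le> - bias B y}"
  proof
    fix y assume y: "y \<in> {y \<in> Pow B. real (card B) / 4 \<le> bias B y ^ 2}"
    then have "sqrt (real (card B) / 4) \<le> sqrt (bias B y ^ 2)"
      by (intro real_sqrt_le_mono) simp
    then have "t \<le> \<bar>bias B y\<bar>"
      by (simp add: t_def real_sqrt_divide)
    with y show "y \<in> upper_tail B t \<union> {y \<in> Pow B. t \<le> - bias B y}"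
      by (auto simp: upper_tail_def abs_if split: if_splits)
  qed
  have "card {y \<in> Pow B. real (card B) / 4 \<le> bias B y ^ 2}
      \<le> card (upper_tail B t) + card {y \<in> Pow B. t \<le> - bias B y}"
    using card_mono[OF _ cover] card_Un_le[of "upper_tail B t"] assms(1)
    by (simp add: finite_upper_tail) (meson order.trans)
  also have "card {y \<in> Pow B. t \<le> - bias B y} = card (upper_tail B t)"
    using card_bias_reflect[OF assms(1), of "\<lambda>s. t \<le> s"] by (simp add: upper_tail_def)
  finally show ?thesis
    using card_bias_power2_ge[OF assms] by (simp add: t_def)
qed

lemma card_upper_tail_0:
  assumes "finite D"
  shows "2 ^ card D \<le> 2 * real (card (upper_tail D 0))"
proof -
  have "Pow D = upper_tail D 0 \<union> {x \<in> Pow D. bias D x < 0}"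
    by (auto simp: upper_tail_def)
  then have "card (Pow D) \<le> card (upper_tail D 0) + card {x \<in> Pow D. bias D x < 0}"
    using card_Un_le by metis
  also have "card {x \<in> Pow D. bias D x < 0} = card {x \<in> Pow D. - bias D x < 0}"
    by (rule card_bias_reflect[OF assms])
  also have "\<dots> \<le> card (upper_tail D 0)"
    by (rule card_mono) (auto simp: upper_tail_def assms)
  finally have "card (Pow D) \<le> 2 * card (upper_tail D 0)" by simp
  from of_nat_mono[OF this] show ?thesis
    using assms by (simp add: card_Pow)
qed

lemma bias_Un:
  assumes "finite A" "finite B" "A \<inter> B = {}" "x \<subseteq> A" "y \<subseteq> B"
  shows "bias (A \<union> B) (x \<union> y) = bias A x + bias B y"
proof -
  have "finite x" "finite y" "x \<inter> y = {}" using assms finite_subset by auto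
  then show ?thesis using assms by (simp add: bias_def card_Un_disjoint)
qed

lemma card_upper_tail_Un:
  assumes "finite A" "finite B" "A \<inter> B = {}"
  shows "card (upper_tail A s) * card (upper_tail B t) \<le> card (upper_tail (A \<union> B) (s + t))"
proof -
  let ?g = "\<lambda>(x, y). x \<union> y"
  have inj: "inj_on ?g (upper_tail A s \<times> upper_tail B t)"
  proof (rule inj_onI, clarify)
    fix x y x' y'
    assume "x \<in> upper_tail A s" "y \<in> upper_tail B t" "x' \<in> upper_tail A s" "y' \<in> upper_tail B t"
      and "x \<union> y = x' \<union> y'"
    then show "x = x' \<and> y = y'"
      using assms(3) unfolding upper_tail_def by blast
  qed
  have sub: "?g ` (upper_tail A s \<times> upper_tail B t) \<subseteq> upper_tail (A \<union> B) (s + t)"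
  proof clarify
    fix x y assume "x \<in> upper_tail A s" "y \<in> upper_tail B t"
    then show "x \<union> y \<in> upper_tail (A \<union> B) (s + t)"
      using assms by (auto simp: upper_tail_def bias_Un)
  qed
  have "card (upper_tail A s \<times> upper_tail B t) \<le> card (upper_tail (A \<union> B) (s + t))"
    using card_image[OF inj] card_mono[OF finite_upper_tail sub] assms by simp
  then show ?thesis by (simp add: card_cartesian_product)
qed

lemma card_upper_tail_blocks:
  assumes "finite D" "card D = m * b" "b \<ge> 1"
  shows "(3/32) ^ m * 2 ^ (m * b) \<le> real (card (upper_tail D (real m * sqrt (real b) / 2)))"
  using assms(1,2)
proof (induction m arbitrary: D)
  case 0
  then show ?case by (simp add: upper_tail_def bias_def)
next
  case (Suc m)
  define s where "s = sqrt (real b) / 2"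
  obtain B where B: "B \<subseteq> D" "card B = b"
    using obtain_subset_with_card_n[of b D] Suc.prems by auto
  have fin: "finite B" "finite (D - B)" using B Suc.prems finite_subset by auto
  have "card (D - B) = m * b" using B Suc.prems by (simp add: card_Diff_subset fin)
  then have IH: "(3/32) ^ m * 2 ^ (m * b) \<le> real (card (upper_tail (D - B) (m * s)))"
    using Suc.IH fin by (simp add: s_def)
  have block: "3/32 * 2 ^ b \<le> real (card (upper_tail B s))"
    using card_upper_tail_half_sqrt[OF fin(1)] B assms(3) by (simp add: s_def)
  have "(3/32::real) ^ Suc m * 2 ^ (Suc m * b) = ((3/32) ^ m * 2 ^ (m * b)) * (3/32 * 2 ^ b)"
    by (simp add: power_add algebra_simps)
  also have "\<dots> \<le> real (card (upper_tail (D - B) (m * s))) * real (card (upper_tail B s))"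
    using IH block by (intro mult_mono) auto
  also have "\<dots> \<le> real (card (upper_tail ((D - B) \<union> B) (m * s + s)))"
    using card_upper_tail_Un[OF fin(2,1)]
    by (metis Diff_disjoint inf_commute of_nat_le_iff of_nat_mult)
  also have "(D - B) \<union> B = D" using B by blast
  finally show ?case by (simp add: s_def field_simps)
qed

text \<open>Split \<open>D\<close> into \<open>k\<close> blocks of size \<open>b = |D| div k\<close>, each biased by \<open>\<surd>b/2\<close> with
  probability \<open>\<ge> 3/32\<close>, and a remainder with nonnegative bias with probability \<open>\<ge> 1/2\<close>.\<close>
lemma card_upper_tail_sqrt_mult:
  assumes "finite D" "1 \<le> k" "k \<le> card D"
  shows "(3/32) ^ k / 2 * 2 ^ card D
    \<le> real (card (upper_tail D (sqrt (real k * real (card D) / 8))))"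
proof -
  define b where "b = card D div k"
  have b: "b \<ge> 1" "k * b \<le> card D"
    using assms(2,3) by (auto simp: b_def div_greater_zero_iff Suc_le_eq)
  have "card D = k * b + card D mod k" "card D mod k < k" "k \<le> k * b"
    using assms(2) b(1) by (simp_all add: b_def)
  then have b2: "card D \<le> 2 * (k * b)" by linarith
  obtain D1 where D1: "D1 \<subseteq> D" "card D1 = k * b"
    using obtain_subset_with_card_n[of "k * b" D] b by auto
  have fin: "finite D1" "finite (D - D1)" using D1 assms(1) finite_subset by auto
  have "real (card D) \<le> 2 * (real k * real b)" using of_nat_mono[OF b2] by simp
  then have "real k * real (card D) \<le> real k * (2 * (real k * real b))"
    by (rule mult_left_mono) simp
  then have "sqrt (real k * real (card D) / 8) \<le> sqrt (real k * (2 * (real k * real b)) / 8)"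
    by (intro real_sqrt_le_mono divide_right_mono) auto
  also have "\<dots> = real k * sqrt (real b) / 2"
    by (simp add: real_sqrt_mult real_sqrt_divide power2_eq_square[symmetric])
  finally have sq: "sqrt (real k * real (card D) / 8) \<le> real k * sqrt (real b) / 2 + 0" by simp
  have "(3/32::real) ^ k / 2 * 2 ^ card D = ((3/32) ^ k * 2 ^ (k * b)) * (2 ^ card (D - D1) / 2)"
    using D1 b fin by (simp add: card_Diff_subset power_add[symmetric])
  also have "\<dots> \<le> real (card (upper_tail D1 (real k * sqrt (real b) / 2)))
      * real (card (upper_tail (D - D1) 0))"
    using card_upper_tail_blocks[OF fin(1) D1(2) b(1)] card_upper_tail_0[OF fin(2)]
    by (intro mult_mono) auto
  also have "\<dots> \<le> real (card (upper_tail (D1 \<union> (D - D1)) (real k * sqrt (real b) / 2 + 0)))"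
    using card_upper_tail_Un[OF fin] by (metis Diff_disjoint of_nat_le_iff of_nat_mult)
  also have "\<dots> \<le> real (card (upper_tail D (sqrt (real k * real (card D) / 8))))"
    using card_mono[OF finite_upper_tail[OF assms(1)] upper_tail_antimono[OF sq]] D1(1)
    by (simp add: Un_absorb1)
  finally show ?thesis .
qed

lemma card_upper_tail_8_sqrt:
  assumes "finite D" "512 \<le> card D"
  shows "(3/32) ^ 512 / 2 * 2 ^ card D \<le> real (card (upper_tail D (8 * sqrt (card D))))"
proof -
  have "sqrt (real 512 * card D / 8) = 8 * sqrt (card D)"
    using real_sqrt_mult[of 64 "card D"] by simp
  then show ?thesis using card_upper_tail_sqrt_mult[OF assms(1) _ assms(2)] by simp
qed

lemma sum_Pow_power_card_Diff:
  fixes a :: "'b :: comm_semiring_1"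
  shows "finite S \<Longrightarrow> (\<Sum>z\<in>Pow S. a ^ (card S - card z)) = (a + 1) ^ card S"
proof (induction S rule: finite_induct)
  case (insert x F)
  have "a ^ (card (insert x F) - card z) + a ^ (card (insert x F) - card (insert x z))
      = (a + 1) * a ^ (card F - card z)" if "z \<in> Pow F" for z
  proof -
    have "finite z" "x \<notin> z" "card z \<le> card F"
      using that insert finite_subset card_mono by auto
    then show ?thesis using insert by (simp add: Suc_diff_le algebra_simps)
  qed
  then show ?case
    using insert by (simp add: sum_Pow_insert sum_distrib_left[symmetric])
qed simp

lemma two_powr_lt_three_powr:
  fixes x :: real
  assumes "x > 0"
  shows "2 powr (9/8 * x) < 3 powr (3/4 * x)"
proof -
  have "(2::real) powr (9/8 * x) = 8 powr (3/8 * x)"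
    using powr_powr[of 2 3 "3/8 * x"] by (simp add: powr_numeral)
  also have "\<dots> < 9 powr (3/8 * x)"
    using assms by (intro powr_less_mono2) auto
  also have "\<dots> = 3 powr (3/4 * x)"
    using powr_powr[of 3 2 "3/8 * x"] by (simp add: powr_numeral)
  finally show ?thesis .
qed

text \<open>Weight each \<open>z\<close> by \<open>3^(n - |z|)\<close>: the total weight is \<open>4^n\<close>, and each small \<open>z\<close>
  weighs at least \<open>3^(3n/4)\<close>.\<close>
lemma card_Pow_quarter_less:
  assumes "finite S" "card S > 0"
  shows "real (card {z \<in> Pow S. 4 * card z \<le> card S}) < 2 powr (7/8 * card S)"
proof -
  define Q where "Q = {z \<in> Pow S. 4 * card z \<le> card S}"
  have "real (card Q) * 3 powr (3/4 * card S) = (\<Sum>z\<in>Q. 3 powr (3/4 * card S))" by simp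
  also have "\<dots> \<le> (\<Sum>z\<in>Q. (3::real) ^ (card S - card z))"
  proof (rule sum_mono)
    fix z assume "z \<in> Q"
    then have "3/4 * real (card S) \<le> real (card S - card z)" by (auto simp: Q_def of_nat_diff)
    then show "3 powr (3/4 * card S) \<le> (3::real) ^ (card S - card z)"
      by (simp add: powr_realpow[symmetric])
  qed
  also have "\<dots> \<le> (\<Sum>z\<in>Pow S. (3::real) ^ (card S - card z))"
    using assms(1) by (intro sum_mono2) (auto simp: Q_def)
  also have "\<dots> = 4 ^ card S"
    using sum_Pow_power_card_Diff[OF assms(1), of 3] by simp
  also have "\<dots> = 2 powr real (2 * card S)"
    using powr_realpow[of 2 "2 * card S"] by (simp add: power_mult)
  also have "\<dots> = 2 powr (7/8 * card S) * 2 powr (9/8 * card S)" by (simp add: powr_add[symmetric])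
  also have "\<dots> < 2 powr (7/8 * card S) * 3 powr (3/4 * card S)"
    using two_powr_lt_three_powr assms(2) by simp
  finally show ?thesis by (simp add: Q_def)
qed

lemma exists_far_point:
  assumes "C \<subseteq> cube N" "u \<in> C" "N > 0" "2 powr (7/8 * N) \<le> card C"
  shows "\<exists>v\<in>C. N < 4 * hamming u v"
proof (rule ccontr)
  assume "\<not> (\<exists>v\<in>C. N < 4 * hamming u v)"
  then have near: "4 * hamming u v \<le> N" if "v \<in> C" for v
    using that by (simp add: not_less)
  define Q where "Q = {z \<in> Pow {..<N}. 4 * card z \<le> card {..<N}}"
  have "inj_on (\<lambda>w. sym_diff u w) C"
    by (rule inj_on_inverseI[where g = "\<lambda>z. sym_diff u z"]) blast
  moreover have "(\<lambda>w. sym_diff u w) ` C \<subseteq> Q"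
    using assms(1,2) near by (auto simp: Q_def cube_def hamming_def)
  moreover have "finite Q" by (simp add: Q_def)
  ultimately have "card C \<le> card Q" by (rule card_inj_on_le)
  moreover have "real (card Q) < 2 powr (7/8 * N)"
    using card_Pow_quarter_less[of "{..<N}"] assms(3) by (simp add: Q_def)
  ultimately show False using assms(4) by linarith
qed

lemma hamming_sym_diff_Un:
  assumes "finite (sym_diff u v)" "x \<subseteq> sym_diff u v" "finite y" "y \<inter> sym_diff u v = {}"
  shows "hamming u (sym_diff u (x \<union> y)) = card x + card y"
    and "hamming v (sym_diff u (x \<union> y)) = card (sym_diff u v - x) + card y"
proof -
  have "finite x" "x \<inter> y = {}" using assms finite_subset by auto
  moreover have "sym_diff u (sym_diff u (x \<union> y)) = x \<union> y" by blast
  ultimately show "hamming u (sym_diff u (x \<union> y)) = card x + card y"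
    using assms(3) by (simp add: hamming_def card_Un_disjoint)
  have "sym_diff v (sym_diff u (x \<union> y)) = (sym_diff u v - x) \<union> y"
    using assms(2,4) by blast
  moreover have "card ((sym_diff u v - x) \<union> y) = card (sym_diff u v - x) + card y"
    by (rule card_Un_disjoint) (use assms in auto)
  ultimately show "hamming v (sym_diff u (x \<union> y)) = card (sym_diff u v - x) + card y"
    by (simp add: hamming_def)
qed

lemma inj_on_sym_diff_Un:
  "inj_on (\<lambda>(x, y). sym_diff u (x \<union> y)) (Pow D \<times> {y. y \<inter> D = {}})"
proof (rule inj_onI, clarify)
  fix x y x' y'
  assume "x \<subseteq> D" "y \<inter> D = {}" "x' \<subseteq> D" "y' \<inter> D = {}"
    and "sym_diff u (x \<union> y) = sym_diff u (x' \<union> y')"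
  moreover from this(5) have "x \<union> y = x' \<union> y'" by blast
  ultimately show "x = x' \<and> y = y'" by blast
qed

lemma sym_diff_Un_in_far_near:
  fixes u v :: "nat set" and N :: nat
  defines "D \<equiv> sym_diff u v" and "A \<equiv> {..<N} - sym_diff u v"
  assumes "u \<in> cube N" "v \<in> cube N" "real N \<le> 4 * real (hamming u v)"
    and x: "x \<in> upper_tail D (8 * sqrt (card D))"
    and y: "y \<subseteq> A" "bias A y ^ 2 \<le> 4 * N"
  shows "sym_diff u (x \<union> y) \<in> far_near N u v"
proof -
  have DN: "D \<subseteq> {..<N}" using assms(3,4) by (auto simp: D_def cube_def)
  then have fin: "finite D" "finite y" and "card D \<le> N"
    using y(1) finite_subset[of D] finite_subset[of y] card_mono[of "{..<N}" D]
    by (auto simp: A_def)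
  then have cardA: "real (card A) = real N - card D"
    using DN by (simp add: A_def card_Diff_subset D_def of_nat_diff)
  have dh: "card D = hamming u v" by (simp add: D_def hamming_def)
  have xD: "x \<subseteq> D" and bx: "8 * sqrt (card D) \<le> 2 * real (card x) - card D"
    using x by (auto simp: upper_tail_def bias_def)
  have "\<bar>bias A y\<bar> \<le> 2 * sqrt N"
    using real_sqrt_le_mono[OF y(2)] by (simp add: real_sqrt_mult)
  then have bound_y: "\<bar>2 * real (card y) - card A\<bar> \<le> 2 * sqrt N" by (simp add: bias_def)
  have "sqrt N \<le> sqrt (4 * card D)" using assms(5) dh by (intro real_sqrt_le_mono) simp
  then have sqN: "sqrt N \<le> 2 * sqrt (card D)" by (simp add: real_sqrt_mult)
  have yD: "y \<inter> D = {}" using y(1) by (auto simp: A_def D_def)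
  have "real (card (D - x)) = card D - real (card x)"
    using xD fin(1) by (simp add: card_Diff_subset finite_subset card_mono of_nat_diff)
  then have hu: "real (hamming u (sym_diff u (x \<union> y))) = card x + card y"
    and hv: "real (hamming v (sym_diff u (x \<union> y))) = card D - real (card x) + card y"
    using hamming_sym_diff_Un[of u v x y, folded D_def, OF fin(1) xD fin(2) yD] by simp_all
  have "real (hamming u (sym_diff u (x \<union> y))) \<ge> real N / 2"
    using hu bx bound_y sqN cardA unfolding abs_le_iff by linarith
  moreover have "real (hamming v (sym_diff u (x \<union> y))) \<le> real N / 2 - sqrt N"
    using hv bx bound_y sqN cardA unfolding abs_le_iff by linarith
  moreover have "sym_diff u (x \<union> y) \<in> cube N"
    using assms(3) DN xD y(1) by (auto simp: cube_def A_def)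
  ultimately show ?thesis by (simp add: far_near_def)
qed

lemma card_far_near_ge:
  fixes u v :: "nat set"
  assumes "u \<in> cube N" "v \<in> cube N" "N < 4 * hamming u v" "2048 \<le> N"
  shows "3/8 * (3/32) ^ 512 * 2 ^ N \<le> real (card (far_near N u v))"
proof -
  define D where "D = sym_diff u v"
  define A where "A = {..<N} - D"
  define G where "G = upper_tail D (8 * sqrt (card D))"
  define H where "H = {y \<in> Pow A. bias A y ^ 2 \<le> 4 * N}"
  let ?flip = "\<lambda>(x, y). sym_diff u (x \<union> y)"
  have DN: "D \<subseteq> {..<N}" using assms(1,2) by (auto simp: D_def cube_def)
  then have fin: "finite D" "finite A" by (auto simp: A_def finite_subset)
  have "card A = N - card D" "card D \<le> N"
    using DN fin card_mono[OF _ DN] by (simp_all add: A_def card_Diff_subset)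
  then have pow2: "(2::real) ^ card D * 2 ^ card A = 2 ^ N" by (simp add: power_add[symmetric])
  have "card D = hamming u v" by (simp add: D_def hamming_def)
  then have G: "(3/32) ^ 512 / 2 * 2 ^ card D \<le> real (card G)"
    using card_upper_tail_8_sqrt[OF fin(1)] assms(3,4) by (simp add: G_def)
  have "card A \<le> N" using \<open>card A = N - card D\<close> by simp
  then have H: "3/4 * 2 ^ card A \<le> real (card H)"
    using card_bias_power2_le[OF fin(2), of "real N"] assms(4) by (simp add: H_def)
  have "G \<times> H \<subseteq> Pow D \<times> {y. y \<inter> D = {}}"
    by (auto simp: G_def H_def A_def upper_tail_def)
  then have "inj_on ?flip (G \<times> H)" by (rule inj_on_subset[OF inj_on_sym_diff_Un])
  moreover have "?flip ` (G \<times> H) \<subseteq> far_near N u v"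
  proof (rule image_subsetI)
    fix p assume "p \<in> G \<times> H"
    then obtain x y where p: "p = (x, y)" "x \<in> G" "y \<in> H" by blast
    then have "x \<in> upper_tail D (8 * sqrt (card D))" "y \<subseteq> A" "bias A y ^ 2 \<le> 4 * N"
      by (simp_all add: G_def H_def)
    moreover have "real N \<le> 4 * real (hamming u v)" using assms(3) by simp
    ultimately show "?flip p \<in> far_near N u v"
      using sym_diff_Un_in_far_near[where u = u and v = v and N = N, folded D_def, folded A_def]
        assms(1,2) p(1) by simp
  qed
  moreover have "finite (far_near N u v)" by (simp add: far_near_def cube_def)
  ultimately have "card (G \<times> H) \<le> card (far_near N u v)" by (rule card_inj_on_le)
  then have GH: "real (card G) * real (card H) \<le> real (card (far_near N u v))"
    by (simp add: card_cartesian_product flip: of_nat_mult)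
  have "3/8 * (3/32) ^ 512 * 2 ^ N
      = ((3/32) ^ 512 / 2 * 2 ^ card D) * (3/4 * (2::real) ^ card A)"
    unfolding pow2[symmetric] by (simp add: algebra_simps)
  also have "\<dots> \<le> real (card G) * real (card H)" using G H by (intro mult_mono) auto
  finally show ?thesis using GH by linarith
qed

lemma partition_on_exists_large_part:
  assumes "finite A" "partition_on A P" "A \<noteq> {}"
  shows "\<exists>C\<in>P. card A \<le> card C * card P"
proof -
  have P: "finite P" "P \<noteq> {}"
    using finite_elements[OF assms(1,2)] partition_onD1[OF assms(2)] assms(3) by auto
  have "Max (card ` P) \<in> card ` P" using P by simp
  then obtain C where C: "C \<in> P" "card C = Max (card ` P)" by auto
  have "card A = (\<Sum>C\<in>P. card C)"
    using product_partition[OF assms(2)] partition_onD1[OF assms(2)] assms(1)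
    by (meson Union_upper finite_subset)
  also have "\<dots> \<le> (\<Sum>_\<in>P. card C)" using C P by (intro sum_mono) simp
  finally have "card A \<le> card C * card P" using C by (simp add: mult.commute)
  with C show ?thesis by blast
qed

lemma few_parts_far_pair:
  assumes "partition_on (cube N) P" "real (card P) < 2 powr (N / 8)" "N > 0"
  shows "\<exists>C\<in>P. \<exists>u\<in>C. \<exists>v\<in>C. N < 4 * hamming u v"
proof -
  have "finite (cube N)" "cube N \<noteq> {}" "card (cube N) = 2 ^ N" by (auto simp: cube_def card_Pow)
  then obtain C where C: "C \<in> P" "2 ^ N \<le> card C * card P"
    using partition_on_exists_large_part[OF _ assms(1)] by auto
  have large: "2 powr (7/8 * N) \<le> card C"
  proof (rule ccontr)
    assume "\<not> 2 powr (7/8 * N) \<le> card C"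
    then have "real (card C) * card P < 2 powr (7/8 * N) * 2 powr (N / 8)"
      using assms(2) by (intro mult_strict_mono) auto
    also have "\<dots> = 2 ^ N" by (simp add: powr_add[symmetric] powr_realpow)
    finally show False using of_nat_mono[OF C(2), where 'a = real] by simp
  qed
  obtain u where u: "u \<in> C" using C(1) partition_onD3[OF assms(1)] by (metis equals0I)
  have "C \<subseteq> cube N" using C(1) partition_onD1[OF assms(1)] by blast
  with u large assms(3) obtain v where "v \<in> C" "N < 4 * hamming u v"
    using exists_far_point by blast
  with C(1) u show ?thesis by blast
qed

lemma card_partition_ge:
  assumes "2048 \<le> N" "partition_on (cube N) P"
    and "\<forall>C\<in>P. \<forall>u\<in>C. \<forall>v\<in>C. real (card (far_near N u v)) \<le> 3/16 * (3/32) ^ 512 * 2 ^ N"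
  shows "2 powr (real N / 8) \<le> real (card P)"
proof (rule ccontr)
  assume "\<not> 2 powr (real N / 8) \<le> real (card P)"
  then obtain C u v where C: "C \<in> P" "u \<in> C" "v \<in> C" and far: "N < 4 * hamming u v"
    using few_parts_far_pair[OF assms(2)] assms(1) by auto
  have "u \<in> cube N" "v \<in> cube N" using partition_onD1[OF assms(2)] C by blast+
  then have "3/8 * (3/32) ^ 512 * 2 ^ N \<le> real (card (far_near N u v))"
    using card_far_near_ge far assms(1) by blast
  also have "\<dots> \<le> 3/16 * (3/32) ^ 512 * 2 ^ N"
    using assms(3) C by blast
  finally show False by simp
qed

theorem lemma5p7:
  shows "\<exists>\<eta>::real. \<eta> > 0 \<and> (\<exists>c::real. c > 0 \<and> (\<exists>N0::nat. \<forall>N\<ge>N0. \<forall>P.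
     (partition_on (cube N) P \<and>
      (\<forall>C\<in>P. \<forall>u\<in>C. \<forall>v\<in>C.
         real (card {w \<in> cube N. real (hamming u w) \<ge> real N / 2 \<and>
                                  real (hamming v w) \<le> real N / 2 - sqrt (real N)})
           \<le> \<eta> * 2 ^ N))
     \<longrightarrow> real (card P) \<ge> 2 powr (c * real N)))"
  unfolding far_near_def[symmetric]
proof (rule exI[of _ "3/16 * (3/32) ^ 512"], intro conjI exI[of _ "1/8"] exI[of _ 2048] allI impI)
  fix N :: nat and P
  assume "2048 \<le> N" and "partition_on (cube N) P \<and> (\<forall>C\<in>P. \<forall>u\<in>C. \<forall>v\<in>C.
    real (card (far_near N u v)) \<le> 3/16 * (3/32) ^ 512 * 2 ^ N)"
  then show "2 powr (1/8 * real N) \<le> real (card P)"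
    using card_partition_ge[of N P] by simp
qed simp_all

end
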